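(* Let $\mathcal{G}$ be a 2-player zero-sum finite game ($u_1=-u_2$) that admits a Nash equilibrium in the relative interior of $\mathcal{X}$. Then for every solution $y(t)$ of $\dot y_k=v_k(Q(y))$, $k=1,2$, the time average $\bar x(t)=t^{-1}\int_0^tx(s)\,ds$ of $x(t)=Q(y(t))$ converges to the set of Nash equilibria of $\mathcal{G}$.
   Context: Setting: finite game with players $\{1,2\}$, action sets $\mathcal{A}_k$, mixed strategies $\mathcal{X}_k=\Delta(\mathcal{A}_k)$, $\mathcal{X}=\mathcal{X}_1\times\mathcal{X}_2$, bilinear expected payoffs $u_k$, payoff vectors $v_k(x)=(u_k(\alpha;x_{-k}))_{\alpha\in\mathcal{A}_k}$. Each player has a penalty function $h_k$ on $\mathcal{X}_k$ (continuous, $C^\infty$ on relative interiors of faces, strongly convex: $h(tx_1+(1-t)x_2)\le th(x_1)+(1-t)h(x_2)-\tfrac12Kt(1-t)\|x_1-x_2\|^2$, $K>0$), with choice map $Q_k(y_k)=\arg\max_{x_k\in\mathcal{X}_k}\{\langle y_k,x_k\rangle-h_k(x_k)\}$; $Q=(Q_1,Q_2)$. *)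

theory Defs
  imports "HOL-Analysis.Analysis"
begin

definition mixed :: "(real^'a::finite) set" where
  "mixed = {x. (\<forall>i. 0 \<le> x $ i) \<and> (\<Sum>i\<in>UNIV. x $ i) = 1}"

definition strongly_convex_on :: "('a::real_normed_vector) set \<Rightarrow> real \<Rightarrow> ('a \<Rightarrow> real) \<Rightarrow> bool" where
  "strongly_convex_on S K h \<longleftrightarrow>
     (\<forall>x1\<in>S. \<forall>x2\<in>S. \<forall>t\<in>{0..1}.
        h (t *\<^sub>R x1 + (1 - t) *\<^sub>R x2)
          \<le> t * h x1 + (1 - t) * h x2 - (1/2) * K * t * (1 - t) * (norm (x1 - x2))\<^sup>2)"

text \<open>C-infinity on a set S which is relatively open in an affine subspace with
  direction set V: all iterated directional (partial) derivatives along directions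
  in V, of all orders, exist and are continuous on S.  D us is the iterated
  derivative along the list of directions us (innermost last).\<close>
definition smooth_along :: "('a::real_normed_vector) set \<Rightarrow> 'a set \<Rightarrow> ('a \<Rightarrow> real) \<Rightarrow> bool" where
  "smooth_along S V f \<longleftrightarrow>
     (\<exists>D :: 'a list \<Rightarrow> 'a \<Rightarrow> real.
        (\<forall>x\<in>S. D [] x = f x) \<and>
        (\<forall>us. set us \<subseteq> V \<longrightarrow> continuous_on S (D us)) \<and>
        (\<forall>us u x. set us \<subseteq> V \<longrightarrow> u \<in> V \<longrightarrow> x \<in> S \<longrightarrow>
           ((\<lambda>s. D us (x + s *\<^sub>R u)) has_real_derivative D (u # us) x)
             (at 0 within {s. x + s *\<^sub>R u \<in> S})))"

definition smooth_on_faces :: "('a::euclidean_space) set \<Rightarrow> ('a \<Rightarrow> real) \<Rightarrow> bool" where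
  "smooth_on_faces S h \<longleftrightarrow>
     (\<forall>F. F face_of S \<and> F \<noteq> {} \<longrightarrow>
        smooth_along (rel_interior F) {x - y | x y. x \<in> F \<and> y \<in> F} h)"

definition penalty :: "((real^'a::finite) \<Rightarrow> real) \<Rightarrow> bool" where
  "penalty h \<longleftrightarrow> continuous_on mixed h \<and> smooth_on_faces mixed h \<and>
     (\<exists>K>0. strongly_convex_on mixed K h)"

definition choice :: "((real^'a::finite) \<Rightarrow> real) \<Rightarrow> real^'a \<Rightarrow> real^'a" where
  "choice h y = (THE x. x \<in> mixed \<and> (\<forall>x'\<in>mixed. y \<bullet> x' - h x' \<le> y \<bullet> x - h x))"

definition u1 :: "('a::finite \<Rightarrow> 'b::finite \<Rightarrow> real) \<Rightarrow> (real^'a) \<times> (real^'b) \<Rightarrow> real" where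
  "u1 U x = (\<Sum>a\<in>UNIV. \<Sum>b\<in>UNIV. U a b * fst x $ a * snd x $ b)"

definition v1 :: "('a::finite \<Rightarrow> 'b::finite \<Rightarrow> real) \<Rightarrow> (real^'a) \<times> (real^'b) \<Rightarrow> real^'a" where
  "v1 U x = (\<chi> a. \<Sum>b\<in>UNIV. U a b * snd x $ b)"

definition v2 :: "('a::finite \<Rightarrow> 'b::finite \<Rightarrow> real) \<Rightarrow> (real^'a) \<times> (real^'b) \<Rightarrow> real^'b" where
  "v2 U x = (\<chi> b. \<Sum>a\<in>UNIV. U a b * fst x $ a)"

definition nash_equilibria ::
  "('a::finite \<Rightarrow> 'b::finite \<Rightarrow> real) \<Rightarrow> ('a \<Rightarrow> 'b \<Rightarrow> real) \<Rightarrow> ((real^'a) \<times> (real^'b)) set" where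
  "nash_equilibria U1 U2 =
     {x. x \<in> mixed \<times> mixed \<and>
         (\<forall>x1'\<in>mixed. u1 U1 (x1', snd x) \<le> u1 U1 x) \<and>
         (\<forall>x2'\<in>mixed. u1 U2 (fst x, x2') \<le> u1 U2 x)}"

end

theory Submission
  imports Defs
begin

text \<open>Let \<open>a\<close> be a fully mixed equilibrium. The Fenchel coupling
  \<open>F(y) = \<Sum>\<^sub>k h\<^sub>k(a\<^sub>k) + h\<^sub>k\<^sup>*(y\<^sub>k) - y\<^sub>k \<bullet> a\<^sub>k\<close> is nonnegative, and since the gradient of
  \<open>h\<^sub>k\<^sup>*\<close> is \<open>Q\<^sub>k\<close> its derivative along the dynamics is \<open>\<Sum>\<^sub>k v\<^sub>k(x) \<bullet> (x\<^sub>k - a\<^sub>k)\<close>.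
  This vanishes: the game is zero-sum and at the interior equilibrium each player is
  indifferent between all strategies. So \<open>F\<close> is conserved, and because \<open>a\<close> puts positive
  weight on every action, a bounded coupling bounds the coordinate differences of each score
  vector \<open>y\<^sub>k(t)\<close>. Integrating the linear dynamics shows that \<open>v\<^sub>k\<close> at the time average
  equals \<open>(y\<^sub>k(t) - y\<^sub>k(0)) / t\<close>, so the time average has asymptotically equalized payoffs;
  on the compact strategy space, profiles with equalized payoffs are equilibria.\<close>

section \<open>Mixed strategies\<close>

lemma mixed_nonneg: "x \<in> mixed \<Longrightarrow> 0 \<le> x $ i"
  by (simp add: mixed_def)

lemma mixed_sum: "x \<in> mixed \<Longrightarrow> (\<Sum>i\<in>UNIV. x $ i) = 1"
  by (simp add: mixed_def)

lemma mixed_le_1: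
  assumes "x \<in> mixed" shows "x $ i \<le> 1"
proof -
  have "x $ i \<le> (\<Sum>j\<in>UNIV. x $ j)"
    by (rule member_le_sum) (auto simp: mixed_nonneg[OF assms])
  with mixed_sum[OF assms] show ?thesis by simp
qed

lemma axis_in_mixed: "axis i 1 \<in> mixed"
  by (simp add: mixed_def axis_def sum.delta)

lemma convex_mixed: "convex mixed"
  unfolding convex_def mixed_def
  by (auto simp: sum.distrib sum_distrib_left[symmetric])

lemma compact_mixed: "compact (mixed :: (real^'a::finite) set)"
  unfolding compact_eq_bounded_closed
proof
  show "bounded (mixed :: (real^'a) set)"
    by (rule bounded_subset[OF bounded_cbox[of 0 1]])
       (auto simp: mem_box_cart mixed_nonneg mixed_le_1)
  have "mixed = (\<Inter>i. {x::real^'a. 0 \<le> x $ i}) \<inter> {x. (\<Sum>i\<in>UNIV. x $ i) = 1}"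
    by (auto simp: mixed_def)
  also have "closed \<dots>"
    by (intro closed_Int closed_INT ballI closed_Collect_le closed_Collect_eq continuous_intros)
  finally show "closed (mixed :: (real^'a) set)" .
qed

lemma rel_interior_mixed_pos:
  assumes "x \<in> rel_interior (mixed :: (real^'a::finite) set)"
  shows "0 < x $ i"
proof -
  have "axis i 1 \<in> affine hull mixed"
    by (rule hull_inc[OF axis_in_mixed])
  then obtain m where "m > 1"
    and m: "\<And>e. 1 < e \<Longrightarrow> e \<le> m \<Longrightarrow> (1 - e) *\<^sub>R axis i 1 + e *\<^sub>R x \<in> mixed"
    using convex_rel_interior_if[OF convex_mixed assms] by blast
  have "0 \<le> ((1 - m) *\<^sub>R axis i 1 + m *\<^sub>R x) $ i"
    using mixed_nonneg m[OF \<open>m > 1\<close> order_refl] by blast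
  then have "m - 1 \<le> m * x $ i" by simp
  with \<open>m > 1\<close> show ?thesis
    by (smt (verit) mult_le_0_iff)
qed

lemma inner_mixed_const:
  assumes "\<And>i j. w $ i = w $ j" and "q \<in> mixed"
  shows "q \<bullet> w = w $ k"
proof -
  have "q \<bullet> w = (\<Sum>i\<in>UNIV. q $ i * w $ k)"
    unfolding inner_vec_def using assms(1) by (intro sum.cong) (auto simp: mult.commute)
  also have "\<dots> = w $ k"
    using mixed_sum[OF assms(2)] by (simp add: sum_distrib_right[symmetric])
  finally show ?thesis .
qed

lemma mixed_equalizer:
  assumes p: "p \<in> mixed" "\<And>i. 0 < p $ i" and le: "\<And>k. w $ k \<le> p \<bullet> w" and q: "q \<in> mixed"
  shows "q \<bullet> w = p \<bullet> w"
proof -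
  have "(\<Sum>i\<in>UNIV. p $ i * (p \<bullet> w - w $ i)) = (p \<bullet> w) * (\<Sum>i\<in>UNIV. p $ i) - p \<bullet> w"
    by (simp add: right_diff_distrib sum_subtractf sum_distrib_right inner_vec_def mult_ac)
  also have "\<dots> = 0" using mixed_sum[OF p(1)] by simp
  finally have "\<forall>i\<in>UNIV. p $ i * (p \<bullet> w - w $ i) = 0"
    using p(2) le
    by (subst sum_nonneg_eq_0_iff[symmetric]) (simp_all add: less_imp_le)
  then have "w $ k = p \<bullet> w" for k using p(2)[of k] by (smt (verit) UNIV_I mult_eq_0_iff)
  then show ?thesis using inner_mixed_const[OF _ q] by metis
qed

lemma average_in_mixed:
  fixes f :: "real \<Rightarrow> real^'a::finite"
  assumes "t > 0" and f: "f integrable_on {0..t}" and "\<And>s. s \<in> {0..t} \<Longrightarrow> f s \<in> mixed"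
  shows "(1 / t) *\<^sub>R integral {0..t} f \<in> mixed"
proof -
  have "0 \<le> integral {0..t} f $ i" for i
  proof -
    have "(\<lambda>s. f s $ i) integrable_on {0..t}"
      using integrable_linear[OF f bounded_linear_vec_nth[of i]] by (simp add: o_def)
    then have "0 \<le> integral {0..t} (\<lambda>s. f s $ i)"
      by (rule integral_nonneg) (use assms(3) mixed_nonneg in blast)
    then show ?thesis using f by simp
  qed
  moreover have "(\<Sum>i\<in>UNIV. integral {0..t} f $ i) = t"
  proof -
    have sum_lin: "bounded_linear (\<lambda>v::real^'a. \<Sum>i\<in>UNIV. v $ i)"
      by (intro bounded_linear_sum bounded_linear_vec_nth)
    have "(\<Sum>i\<in>UNIV. integral {0..t} f $ i) = integral {0..t} (\<lambda>s. \<Sum>i\<in>UNIV. f s $ i)"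
      using integral_linear[OF f sum_lin] by (simp add: o_def)
    also have "\<dots> = integral {0..t} (\<lambda>s. 1)"
      by (rule integral_cong) (simp add: mixed_sum assms(3))
    finally show ?thesis using \<open>t > 0\<close> by simp
  qed
  ultimately show ?thesis
    using \<open>t > 0\<close> by (simp add: mixed_def sum_divide_distrib[symmetric])
qed

section \<open>The choice map and the Fenchel coupling\<close>

lemma strongly_convex_maximizer_gap:
  fixes h :: "'a::real_inner \<Rightarrow> real"
  assumes S: "convex S" and sc: "strongly_convex_on S K h"
    and z: "z \<in> S" "\<And>x'. x' \<in> S \<Longrightarrow> y \<bullet> x' - h x' \<le> y \<bullet> z - h z"
    and x: "x \<in> S"
  shows "y \<bullet> x - h x + K / 4 * (norm (x - z))\<^sup>2 \<le> y \<bullet> z - h z"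
proof -
  define w where "w = (1/2::real) *\<^sub>R x + (1 - 1/2) *\<^sub>R z"
  have half: "(1/2::real) \<in> {0..1}" by simp
  have "w \<in> S" unfolding w_def using S x z(1) by (rule convexD) auto
  then have "y \<bullet> w - h w \<le> y \<bullet> z - h z" by (rule z(2))
  moreover have "h w \<le> 1/2 * h x + (1 - 1/2) * h z - (1/2) * K * (1/2) * (1 - 1/2) * (norm (x - z))\<^sup>2"
    using sc x z(1) half unfolding strongly_convex_on_def w_def by blast
  moreover have "y \<bullet> w = 1/2 * (y \<bullet> x) + 1/2 * (y \<bullet> z)"
    by (simp add: w_def inner_add_right)
  ultimately show ?thesis by simp
qed

lemma penalty_strongly_convex: "penalty h \<Longrightarrow> \<exists>K>0. strongly_convex_on mixed K h"
  by (simp add: penalty_def)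

lemma penalty_bounded:
  assumes "penalty h" obtains B where "\<And>x. x \<in> mixed \<Longrightarrow> \<bar>h x\<bar> \<le> B"
proof -
  have "bounded (h ` mixed)"
    using assms compact_mixed
    by (intro compact_imp_bounded compact_continuous_image) (simp_all add: penalty_def)
  then show ?thesis
    using that unfolding bounded_iff by auto
qed

lemma choice_maximizer:
  assumes h: "penalty h"
  shows choice_in_mixed: "choice h y \<in> mixed"
    and choice_maximal: "x \<in> mixed \<Longrightarrow> y \<bullet> x - h x \<le> y \<bullet> choice h y - h (choice h y)"
proof -
  obtain K where K: "K > 0" "strongly_convex_on mixed K h"
    using penalty_strongly_convex[OF h] by blast
  have "continuous_on mixed h" using h by (simp add: penalty_def)
  then have cont: "continuous_on mixed (\<lambda>x. y \<bullet> x - h x)"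
    by (intro continuous_on_diff continuous_on_inner continuous_on_const continuous_on_id)
  have "mixed \<noteq> {}" using axis_in_mixed by blast
  then obtain z where z: "z \<in> mixed" "\<And>x. x \<in> mixed \<Longrightarrow> y \<bullet> x - h x \<le> y \<bullet> z - h z"
    using continuous_attains_sup[OF compact_mixed _ cont] by blast
  have "x = z" if x: "x \<in> mixed" "\<And>x'. x' \<in> mixed \<Longrightarrow> y \<bullet> x' - h x' \<le> y \<bullet> x - h x" for x
  proof -
    have "y \<bullet> z - h z + K / 4 * (norm (z - x))\<^sup>2 \<le> y \<bullet> x - h x"
      by (rule strongly_convex_maximizer_gap[OF convex_mixed K(2) x z(1)])
    moreover have "y \<bullet> x - h x \<le> y \<bullet> z - h z" by (rule z(2)[OF x(1)])
    ultimately have "K / 4 * (norm (z - x))\<^sup>2 \<le> 0" by simp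
    with K(1) show ?thesis
      by (simp add: mult_le_0_iff)
  qed
  then have "choice h y = z"
    unfolding choice_def using z by (intro the_equality) blast+
  with z show "choice h y \<in> mixed" "x \<in> mixed \<Longrightarrow> y \<bullet> x - h x \<le> y \<bullet> choice h y - h (choice h y)"
    by auto
qed

lemma lipschitz_choice:
  assumes h: "penalty h"
  obtains L where "L-lipschitz_on UNIV (choice h)"
proof -
  obtain K where K: "K > 0" "strongly_convex_on mixed K h"
    using penalty_strongly_convex[OF h] by blast
  have "norm (choice h y - choice h y') \<le> (2/K) * norm (y - y')" for y y'
  proof -
    let ?q = "choice h y" and ?q' = "choice h y'"
    define d where "d = norm (?q - ?q')"
    have "y \<bullet> ?q' - h ?q' + K/4 * (norm (?q' - ?q))\<^sup>2 \<le> y \<bullet> ?q - h ?q"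
      by (rule strongly_convex_maximizer_gap[OF convex_mixed K(2) choice_in_mixed[OF h]
            choice_maximal[OF h] choice_in_mixed[OF h]])
    moreover have "y' \<bullet> ?q - h ?q + K/4 * d\<^sup>2 \<le> y' \<bullet> ?q' - h ?q'"
      unfolding d_def
      by (rule strongly_convex_maximizer_gap[OF convex_mixed K(2) choice_in_mixed[OF h]
            choice_maximal[OF h] choice_in_mixed[OF h]])
    ultimately have "K/2 * d\<^sup>2 \<le> (y - y') \<bullet> (?q - ?q')"
      by (simp add: d_def norm_minus_commute inner_diff_left inner_diff_right)
    also have "\<dots> \<le> norm (y - y') * d"
      unfolding d_def by (rule norm_cauchy_schwarz)
    finally have "K/2 * d\<^sup>2 \<le> norm (y - y') * d" .
    moreover have "d \<ge> 0" by (simp add: d_def)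
    ultimately have "K/2 * d \<le> norm (y - y')"
      by (cases "d = 0") (simp_all add: power2_eq_square mult.assoc[symmetric])
    then show ?thesis
      using K(1) by (simp add: d_def field_simps)
  qed
  then have "(2/K)-lipschitz_on UNIV (choice h)"
    using K(1) by (auto simp: lipschitz_on_def dist_norm)
  then show ?thesis by (rule that)
qed

lemma continuous_on_choice: "penalty h \<Longrightarrow> continuous_on S (choice h)"
  by (metis lipschitz_choice lipschitz_on_continuous_on lipschitz_on_subset top_greatest)

definition fenchel_conj :: "((real^'a::finite) \<Rightarrow> real) \<Rightarrow> real^'a \<Rightarrow> real" where
  "fenchel_conj h y = y \<bullet> choice h y - h (choice h y)"

text \<open>The maximality of \<open>Q y\<close> and \<open>Q y'\<close> squeezes the remainder between 0 and
  \<open>(y' - y) \<bullet> (Q y' - Q y)\<close>, which is quadratic in \<open>norm (y' - y)\<close> since \<open>Q\<close> is Lipschitz.\<close>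
lemma has_derivative_fenchel_conj:
  assumes h: "penalty h"
  shows "(fenchel_conj h has_derivative (\<lambda>d. d \<bullet> choice h y)) (at y)"
proof -
  obtain L where L: "L-lipschitz_on UNIV (choice h)"
    using lipschitz_choice[OF h] by blast
  let ?R = "\<lambda>y'. fenchel_conj h y' - fenchel_conj h y - (y' - y) \<bullet> choice h y"
  have "\<bar>?R y'\<bar> \<le> L * norm (y' - y) * norm (y' - y)" for y'
  proof -
    have "0 \<le> ?R y'"
      using choice_maximal[OF h choice_in_mixed[OF h], of y' y]
      by (simp add: fenchel_conj_def inner_diff_left)
    moreover have "?R y' \<le> (y' - y) \<bullet> (choice h y' - choice h y)"
      using choice_maximal[OF h choice_in_mixed[OF h], of y y']
      by (simp add: fenchel_conj_def inner_diff_left inner_diff_right)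
    moreover have "\<dots> \<le> norm (y' - y) * norm (choice h y' - choice h y)"
      by (rule norm_cauchy_schwarz)
    moreover have "norm (choice h y' - choice h y) \<le> L * norm (y' - y)"
      using L by (simp add: lipschitz_on_def dist_norm)
    ultimately have "?R y' \<le> norm (y' - y) * (L * norm (y' - y))"
      by (meson mult_left_mono norm_ge_zero order_trans)
    with \<open>0 \<le> ?R y'\<close> show ?thesis by (simp add: mult_ac)
  qed
  then have "\<forall>\<^sub>F y' in at y. norm (norm (?R y') / norm (y' - y)) \<le> L * norm (y' - y)"
    by (intro always_eventually allI) (simp add: divide_le_eq mult_ac)
  moreover have "((\<lambda>y'. L * norm (y' - y)) \<longlongrightarrow> 0) (at y)"
    by (intro tendsto_mult_right_zero tendsto_norm_zero LIM_zero tendsto_ident_at)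
  ultimately have "((\<lambda>y'. norm (?R y') / norm (y' - y)) \<longlongrightarrow> 0) (at y)"
    by (rule Lim_null_comparison)
  then show ?thesis
    unfolding has_derivative_iff_norm by (simp add: bounded_linear_inner_left)
qed

definition fenchel_coupling :: "((real^'a::finite) \<Rightarrow> real) \<Rightarrow> real^'a \<Rightarrow> real^'a \<Rightarrow> real" where
  "fenchel_coupling h p y = h p + fenchel_conj h y - y \<bullet> p"

lemma fenchel_coupling_nonneg: "penalty h \<Longrightarrow> p \<in> mixed \<Longrightarrow> 0 \<le> fenchel_coupling h p y"
  using choice_maximal[of h p y] by (simp add: fenchel_coupling_def fenchel_conj_def)

lemma has_derivative_fenchel_coupling:
  assumes "penalty h"
  shows "(fenchel_coupling h p has_derivative (\<lambda>d. d \<bullet> (choice h y - p))) (at y)"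
proof -
  have "((\<lambda>y. h p + fenchel_conj h y - y \<bullet> p) has_derivative
      (\<lambda>d. 0 + d \<bullet> choice h y - d \<bullet> p)) (at y)"
    by (intro has_derivative_diff has_derivative_add has_derivative_const
        has_derivative_fenchel_conj[OF assms]
        bounded_linear_imp_has_derivative bounded_linear_inner_left)
  then show ?thesis
    unfolding fenchel_coupling_def by (simp add: inner_diff_right)
qed

text \<open>Comparing \<open>p\<close> with the best pure strategy for the scores \<open>y\<close>.\<close>
lemma score_gap_le_fenchel_coupling:
  assumes h: "penalty h" and p: "p \<in> mixed"
  obtains c where "\<And>y i j. p $ i * (y $ j - y $ i) \<le> fenchel_coupling h p y + c"
proof -
  obtain B where B: "\<And>x. x \<in> mixed \<Longrightarrow> \<bar>h x\<bar> \<le> B"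
    using penalty_bounded[OF h] by blast
  have "p $ i * (y $ j - y $ i) \<le> fenchel_coupling h p y + 2 * B" for y :: "real^'a" and i j
  proof -
    obtain m where m: "\<And>k. y $ k \<le> y $ m"
      using ex_is_arg_min_if_finite[of UNIV "\<lambda>k. - y $ k"]
      by (auto simp: is_arg_min_def not_less)
    have "y $ m - h (axis m 1) \<le> fenchel_conj h y"
      using choice_maximal[OF h axis_in_mixed] by (simp add: fenchel_conj_def inner_axis)
    moreover have "p $ i * (y $ m - y $ i) \<le> (\<Sum>k\<in>UNIV. p $ k * (y $ m - y $ k))"
      by (rule member_le_sum) (auto intro!: mult_nonneg_nonneg mixed_nonneg[OF p] simp: m)
    moreover have "(\<Sum>k\<in>UNIV. p $ k * (y $ m - y $ k)) = y $ m - y \<bullet> p"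
      using mixed_sum[OF p] by (simp add: inner_vec_def right_diff_distrib sum_subtractf
          sum_distrib_right[symmetric] mult_ac)
    moreover have "p $ i * (y $ j - y $ i) \<le> p $ i * (y $ m - y $ i)"
      using mixed_nonneg[OF p] m by (intro mult_left_mono) auto
    moreover have "\<bar>h p\<bar> \<le> B" "\<bar>h (axis m 1)\<bar> \<le> B"
      using B p axis_in_mixed by auto
    ultimately show ?thesis by (simp add: fenchel_coupling_def)
  qed
  then show ?thesis by (rule that)
qed

section \<open>Payoff spreads and equilibria\<close>

definition spread :: "real^'n::finite \<Rightarrow> real" where
  "spread w = (\<Sum>i\<in>UNIV. \<Sum>j\<in>UNIV. \<bar>w $ i - w $ j\<bar>)"

lemma spread_nonneg: "0 \<le> spread w"
  unfolding spread_def by (intro sum_nonneg) auto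

lemma spread_eq_0_iff: "spread w = 0 \<longleftrightarrow> (\<forall>i j. w $ i = w $ j)"
  unfolding spread_def by (simp add: sum_nonneg_eq_0_iff sum_nonneg)

lemma spread_scaleR: "spread (c *\<^sub>R w) = \<bar>c\<bar> * spread w"
  unfolding spread_def by (simp add: sum_distrib_left abs_mult right_diff_distrib[symmetric])

lemma spread_diff_le: "spread (w - w') \<le> spread w + spread w'"
  unfolding spread_def sum.distrib[symmetric] by (intro sum_mono) auto

lemma continuous_on_spread [continuous_intros]:
  "continuous_on S f \<Longrightarrow> continuous_on S (\<lambda>x. spread (f x))"
  unfolding spread_def by (intro continuous_intros)

lemma spread_le_weighted_gaps:
  fixes w :: "real^'n::finite"
  assumes p: "\<And>i. 0 < p $ i" and gap: "\<And>i j. p $ i * (w $ j - w $ i) \<le> M"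
  shows "spread w \<le> real (CARD('n)) ^ 2 * ((\<Sum>k\<in>UNIV. 1 / p $ k) * M)"
proof -
  have "M \<ge> 0" using gap[of undefined undefined] by simp
  have "w $ j - w $ i \<le> (\<Sum>k\<in>UNIV. 1 / p $ k) * M" for i j
  proof -
    have "w $ j - w $ i \<le> 1 / p $ i * M"
      using gap[of i j] p[of i] by (simp add: field_simps)
    also have "\<dots> \<le> (\<Sum>k\<in>UNIV. 1 / p $ k) * M"
      using p \<open>M \<ge> 0\<close> by (intro mult_right_mono member_le_sum) (auto intro: less_imp_le)
    finally show ?thesis .
  qed
  then have "\<bar>w $ i - w $ j\<bar> \<le> (\<Sum>k\<in>UNIV. 1 / p $ k) * M" for i j
    by (metis abs_le_iff minus_diff_eq)
  then have "spread w \<le> real (CARD('n)) * (real (CARD('n)) * ((\<Sum>k\<in>UNIV. 1 / p $ k) * M))"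
    unfolding spread_def by (intro sum_bounded_above) auto
  then show ?thesis by (simp add: power2_eq_square)
qed

lemma inner_v1: "x1 \<bullet> v1 U (x1', x2) = u1 U (x1, x2)"
  unfolding u1_def inner_vec_def v1_def by (simp add: sum_distrib_left mult_ac)

lemma inner_v2: "x2 \<bullet> v2 U (x1, x2') = u1 U (x1, x2)"
  unfolding u1_def inner_vec_def v2_def
  by (subst sum.swap) (simp add: sum_distrib_left mult_ac)

lemma bounded_linear_v1: "bounded_linear (v1 U)"
  unfolding linear_conv_bounded_linear[symmetric]
  by (rule linearI)
     (simp_all add: vec_eq_iff v1_def sum.distrib sum_distrib_left distrib_left mult_ac)

lemma bounded_linear_v2: "bounded_linear (v2 U)"
  unfolding linear_conv_bounded_linear[symmetric]
  by (rule linearI)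
     (simp_all add: vec_eq_iff v2_def sum.distrib sum_distrib_left distrib_left mult_ac)

lemma interior_equilibrium_indifferent:
  assumes eq: "(a1, a2) \<in> nash_equilibria U1 U2"
    and interior: "(a1, a2) \<in> rel_interior (mixed \<times> mixed)"
  shows "q1 \<in> mixed \<Longrightarrow> q1 \<bullet> v1 U1 (a1, a2) = u1 U1 (a1, a2)"
    and "q2 \<in> mixed \<Longrightarrow> q2 \<bullet> v2 U2 (a1, a2) = u1 U2 (a1, a2)"
proof -
  have a: "a1 \<in> rel_interior mixed" "a2 \<in> rel_interior mixed"
    using interior rel_interior_Times[OF convex_mixed convex_mixed] by auto
  have "a1 \<in> mixed" "a2 \<in> mixed"
    using a rel_interior_subset by blast+
  have "v1 U1 (a1, a2) $ k \<le> a1 \<bullet> v1 U1 (a1, a2)" for k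
    using eq axis_in_mixed[of k] inner_v1[of "axis k 1" U1 a1 a2] inner_v1[of a1 U1 a1 a2]
    by (simp add: nash_equilibria_def inner_axis')
  then have "q1 \<bullet> v1 U1 (a1, a2) = a1 \<bullet> v1 U1 (a1, a2)" if "q1 \<in> mixed"
    by (rule mixed_equalizer[OF \<open>a1 \<in> mixed\<close> rel_interior_mixed_pos[OF a(1)] _ that])
  then show "q1 \<in> mixed \<Longrightarrow> q1 \<bullet> v1 U1 (a1, a2) = u1 U1 (a1, a2)"
    using inner_v1[of a1 U1 a1 a2] by simp
  have "v2 U2 (a1, a2) $ k \<le> a2 \<bullet> v2 U2 (a1, a2)" for k
    using eq axis_in_mixed[of k] inner_v2[of "axis k 1" U2 a1 a2] inner_v2[of a2 U2 a1 a2]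
    by (simp add: nash_equilibria_def inner_axis')
  then have "q2 \<bullet> v2 U2 (a1, a2) = a2 \<bullet> v2 U2 (a1, a2)" if "q2 \<in> mixed"
    by (rule mixed_equalizer[OF \<open>a2 \<in> mixed\<close> rel_interior_mixed_pos[OF a(2)] _ that])
  then show "q2 \<in> mixed \<Longrightarrow> q2 \<bullet> v2 U2 (a1, a2) = u1 U2 (a1, a2)"
    using inner_v2[of a2 U2 a1 a2] by simp
qed

lemma zero_sum_interior_equilibrium_orthogonal:
  assumes zero_sum: "\<And>a b. U2 a b = - U1 a b"
    and eq: "(a1, a2) \<in> nash_equilibria U1 U2"
    and interior: "(a1, a2) \<in> rel_interior (mixed \<times> mixed)"
    and q: "q1 \<in> mixed" "q2 \<in> mixed"
  shows "v1 U1 (q1, q2) \<bullet> (q1 - a1) + v2 U2 (q1, q2) \<bullet> (q2 - a2) = 0"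
proof -
  have zs: "u1 U2 x = - u1 U1 x" for x
    by (simp add: u1_def zero_sum sum_negf)
  note ind = interior_equilibrium_indifferent[OF eq interior]
  have "v1 U1 (q1, q2) \<bullet> a1 = - u1 U2 (a1, q2)"
    using inner_v1[of a1 U1 q1 q2] zs by (simp add: inner_commute)
  also have "\<dots> = u1 U1 (a1, a2)"
    using ind(2)[OF q(2)] inner_v2[of q2 U2 a1 a2] zs by simp
  finally have 1: "v1 U1 (q1, q2) \<bullet> a1 = u1 U1 (a1, a2)" .
  have "v2 U2 (q1, q2) \<bullet> a2 = - u1 U1 (q1, a2)"
    using inner_v2[of a2 U2 q1 q2] zs by (simp add: inner_commute)
  also have "\<dots> = - u1 U1 (a1, a2)"
    using ind(1)[OF q(1)] inner_v1[of q1 U1 a1 a2] by simp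
  finally have 2: "v2 U2 (q1, q2) \<bullet> a2 = - u1 U1 (a1, a2)" .
  have "v1 U1 (q1, q2) \<bullet> q1 + v2 U2 (q1, q2) \<bullet> q2 = 0"
    using inner_v1[of q1 U1 q1 q2] inner_v2[of q2 U2 q1 q2] zs by (simp add: inner_commute)
  with 1 2 show ?thesis by (simp add: inner_diff_right)
qed

lemma nash_equilibriumI_indifferent:
  assumes q: "q1 \<in> mixed" "q2 \<in> mixed"
    and "spread (v1 U1 (q1, q2)) = 0" "spread (v2 U2 (q1, q2)) = 0"
  shows "(q1, q2) \<in> nash_equilibria U1 U2"
proof -
  have const: "\<And>i j. v1 U1 (q1, q2) $ i = v1 U1 (q1, q2) $ j"
    "\<And>i j. v2 U2 (q1, q2) $ i = v2 U2 (q1, q2) $ j"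
    using assms(3,4) spread_eq_0_iff by blast+
  have "u1 U1 (x, q2) \<le> u1 U1 (q1, q2)" if "x \<in> mixed" for x
    using inner_mixed_const[OF const(1) that, where k = undefined]
      inner_mixed_const[OF const(1) q(1), where k = undefined]
      inner_v1[of x U1 q1 q2] inner_v1[of q1 U1 q1 q2] by simp
  moreover have "u1 U2 (q1, x) \<le> u1 U2 (q1, q2)" if "x \<in> mixed" for x
    using inner_mixed_const[OF const(2) that, where k = undefined]
      inner_mixed_const[OF const(2) q(2), where k = undefined]
      inner_v2[of x U2 q1 q2] inner_v2[of q2 U2 q1 q2] by simp
  ultimately show ?thesis
    using q by (simp add: nash_equilibria_def)
qed

lemma infdist_tendsto_0_compact:
  fixes \<psi> :: "'x::metric_space \<Rightarrow> real"
  assumes K: "compact K" and \<psi>: "continuous_on K \<psi>" "\<And>z. z \<in> K \<Longrightarrow> 0 \<le> \<psi> z"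
    and S: "{z \<in> K. \<psi> z = 0} \<subseteq> S"
    and z: "\<forall>\<^sub>F t in F. z t \<in> K" and lim: "((\<lambda>t. \<psi> (z t)) \<longlongrightarrow> 0) F"
  shows "((\<lambda>t. infdist (z t) S) \<longlongrightarrow> 0) F"
proof (rule tendstoI)
  fix \<epsilon> :: real assume "\<epsilon> > 0"
  define T where "T = K \<inter> {x. \<epsilon> \<le> infdist x S}"
  have "compact T"
    unfolding T_def by (intro compact_Int_closed K closed_Collect_le continuous_intros)
  obtain \<delta> where "\<delta> > 0" and \<delta>: "\<And>x. x \<in> T \<Longrightarrow> \<delta> \<le> \<psi> x"
  proof (cases "T = {}")
    case True then show ?thesis using that[of 1] by auto
  next
    case False
    then obtain x0 where x0: "x0 \<in> T" "\<And>x. x \<in> T \<Longrightarrow> \<psi> x0 \<le> \<psi> x"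
      using continuous_attains_inf[OF \<open>compact T\<close> False continuous_on_subset[OF \<psi>(1)]]
      unfolding T_def by blast
    have "\<psi> x0 \<noteq> 0" using x0(1) S \<open>\<epsilon> > 0\<close> by (auto simp: T_def)
    then show ?thesis using that[of "\<psi> x0"] x0 \<psi>(2) by (force simp: T_def)
  qed
  have "\<forall>\<^sub>F t in F. \<psi> (z t) < \<delta>"
    using lim \<open>\<delta> > 0\<close> by (auto dest: order_tendstoD)
  with z show "\<forall>\<^sub>F t in F. dist (infdist (z t) S) 0 < \<epsilon>"
  proof eventually_elim
    case (elim t)
    then show ?case using \<delta>[of "z t"] by (force simp: T_def infdist_nonneg)
  qed
qed

section \<open>Continuous-time follow the regularized leader\<close>

locale zero_sum_ftrl =
  fixes U1 :: "'a::finite \<Rightarrow> 'b::finite \<Rightarrow> real" and U2 :: "'a \<Rightarrow> 'b \<Rightarrow> real"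
    and h1 :: "real^'a \<Rightarrow> real" and h2 :: "real^'b \<Rightarrow> real"
    and y :: "real \<Rightarrow> (real^'a) \<times> (real^'b)"
    and a1 :: "real^'a" and a2 :: "real^'b"
  assumes zero_sum: "\<And>a b. U2 a b = - U1 a b"
    and equilibrium: "(a1, a2) \<in> nash_equilibria U1 U2"
    and interior: "(a1, a2) \<in> rel_interior (mixed \<times> mixed)"
    and h1: "penalty h1" and h2: "penalty h2"
    and sol: "\<And>t. t \<ge> 0 \<Longrightarrow>
       (y has_vector_derivative
          (let x = (choice h1 (fst (y t)), choice h2 (snd (y t))) in (v1 U1 x, v2 U2 x)))
         (at t within {0..})"
begin

definition strategy :: "real \<Rightarrow> (real^'a) \<times> (real^'b)" where
  "strategy t = (choice h1 (fst (y t)), choice h2 (snd (y t)))"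

definition payoff :: "(real^'a) \<times> (real^'b) \<Rightarrow> (real^'a) \<times> (real^'b)" where
  "payoff x = (v1 U1 x, v2 U2 x)"

definition average_strategy :: "real \<Rightarrow> (real^'a) \<times> (real^'b)" where
  "average_strategy t = (1 / t) *\<^sub>R integral {0..t} strategy"

definition coupling :: "real \<Rightarrow> real" where
  "coupling t = fenchel_coupling h1 a1 (fst (y t)) + fenchel_coupling h2 a2 (snd (y t))"

lemma has_vector_derivative_y:
  "t \<ge> 0 \<Longrightarrow> (y has_vector_derivative payoff (strategy t)) (at t within {0..})"
  using sol by (simp add: strategy_def payoff_def Let_def)

lemma strategy_in_mixed: "fst (strategy t) \<in> mixed" "snd (strategy t) \<in> mixed"
  by (simp_all add: strategy_def choice_in_mixed h1 h2)

lemma equilibrium_in_mixed: "a1 \<in> mixed" "a2 \<in> mixed"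
  and equilibrium_pos: "0 < a1 $ i" "0 < a2 $ j"
proof -
  have "a1 \<in> rel_interior mixed" "a2 \<in> rel_interior mixed"
    using interior rel_interior_Times[OF convex_mixed convex_mixed] by auto
  then show "a1 \<in> mixed" "a2 \<in> mixed" "0 < a1 $ i" "0 < a2 $ j"
    using rel_interior_subset rel_interior_mixed_pos by blast+
qed

lemma continuous_on_strategy: "continuous_on {0..} strategy"
proof -
  have "continuous_on {0..} y"
    unfolding continuous_on_eq_continuous_within
    using has_vector_derivative_y has_vector_derivative_continuous by fastforce
  then show ?thesis
    unfolding strategy_def
    by (intro continuous_on_Pair continuous_on_compose2[OF continuous_on_choice[OF h1]]
        continuous_on_compose2[OF continuous_on_choice[OF h2]]
        continuous_on_fst continuous_on_snd) auto
qed

lemma coupling_constant: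
  assumes "t \<ge> 0" shows "coupling t = coupling 0"
proof -
  have "(coupling has_derivative (\<lambda>_. 0)) (at s within {0..})" if "s \<in> {0..}" for s
  proof -
    let ?x = "strategy s"
    have dy: "(y has_derivative (\<lambda>r. r *\<^sub>R payoff ?x)) (at s within {0..})"
      using has_vector_derivative_y[of s] that by (simp add: has_vector_derivative_def)
    have "(coupling has_derivative (\<lambda>r. fst (r *\<^sub>R payoff ?x) \<bullet> (choice h1 (fst (y s)) - a1)
        + snd (r *\<^sub>R payoff ?x) \<bullet> (choice h2 (snd (y s)) - a2))) (at s within {0..})"
      unfolding coupling_def
      by (intro has_derivative_add
          has_derivative_compose[OF has_derivative_fst[OF dy] has_derivative_fenchel_coupling[OF h1]]
          has_derivative_compose[OF has_derivative_snd[OF dy] has_derivative_fenchel_coupling[OF h2]])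
    moreover have "v1 U1 ?x \<bullet> (fst ?x - a1) + v2 U2 ?x \<bullet> (snd ?x - a2) = 0"
      using zero_sum_interior_equilibrium_orthogonal[OF zero_sum equilibrium interior
          strategy_in_mixed(1)[of s] strategy_in_mixed(2)[of s]]
      by simp
    ultimately show ?thesis
      by (simp add: payoff_def strategy_def distrib_left[symmetric])
  qed
  then obtain c where "\<forall>s\<in>{0..}. coupling s = c"
    using has_derivative_zero_constant[OF convex_real_interval(1)] by blast
  with assms show ?thesis by simp
qed

lemma score_spread_bounded:
  obtains B where "\<And>t. t \<ge> 0 \<Longrightarrow> spread (fst (y t)) \<le> B \<and> spread (snd (y t)) \<le> B"
proof -
  obtain c1 where c1: "\<And>w i j. a1 $ i * (w $ j - w $ i) \<le> fenchel_coupling h1 a1 w + c1"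
    using score_gap_le_fenchel_coupling[OF h1 equilibrium_in_mixed(1)] by blast
  obtain c2 where c2: "\<And>w i j. a2 $ i * (w $ j - w $ i) \<le> fenchel_coupling h2 a2 w + c2"
    using score_gap_le_fenchel_coupling[OF h2 equilibrium_in_mixed(2)] by blast
  define B1 where "B1 = real (CARD('a)) ^ 2 * ((\<Sum>k\<in>UNIV. 1 / a1 $ k) * (coupling 0 + c1))"
  define B2 where "B2 = real (CARD('b)) ^ 2 * ((\<Sum>k\<in>UNIV. 1 / a2 $ k) * (coupling 0 + c2))"
  have "spread (fst (y t)) \<le> B1 \<and> spread (snd (y t)) \<le> B2" if "t \<ge> 0" for t
  proof -
    have "fenchel_coupling h1 a1 (fst (y t)) \<le> coupling 0"
      "fenchel_coupling h2 a2 (snd (y t)) \<le> coupling 0"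
      using coupling_constant[OF that]
        fenchel_coupling_nonneg[OF h1 equilibrium_in_mixed(1), of "fst (y t)"]
        fenchel_coupling_nonneg[OF h2 equilibrium_in_mixed(2), of "snd (y t)"]
      unfolding coupling_def by linarith+
    then show ?thesis
      unfolding B1_def B2_def using c1 c2 equilibrium_pos
      by (intro conjI spread_le_weighted_gaps) (fastforce intro: order_trans)+
  qed
  then show ?thesis
    using that[of "max B1 B2"] by fastforce
qed

lemma strategy_integrable: "strategy integrable_on {0..t}"
  by (rule integrable_continuous_real, rule continuous_on_subset[OF continuous_on_strategy]) auto

lemma average_strategy_in_mixed:
  assumes "t > 0" shows "fst (average_strategy t) \<in> mixed" "snd (average_strategy t) \<in> mixed"
proof -
  note int = strategy_integrable[of t]
  have "fst (average_strategy t) = (1 / t) *\<^sub>R integral {0..t} (\<lambda>s. fst (strategy s))"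
    "snd (average_strategy t) = (1 / t) *\<^sub>R integral {0..t} (\<lambda>s. snd (strategy s))"
    unfolding average_strategy_def
    using integral_linear[OF int bounded_linear_fst] integral_linear[OF int bounded_linear_snd]
    by (simp_all add: o_def)
  moreover have "(\<lambda>s. fst (strategy s)) integrable_on {0..t}"
    "(\<lambda>s. snd (strategy s)) integrable_on {0..t}"
    using integrable_linear[OF int bounded_linear_fst] integrable_linear[OF int bounded_linear_snd]
    by (simp_all add: o_def)
  ultimately show "fst (average_strategy t) \<in> mixed" "snd (average_strategy t) \<in> mixed"
    using average_in_mixed[OF assms] strategy_in_mixed by auto
qed

lemma payoff_average_strategy:
  assumes "t > 0" shows "payoff (average_strategy t) = (1 / t) *\<^sub>R (y t - y 0)"
proof -
  have lin: "bounded_linear payoff"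
    unfolding payoff_def by (intro bounded_linear_Pair bounded_linear_v1 bounded_linear_v2)
  have "((\<lambda>s. payoff (strategy s)) has_integral (y t - y 0)) {0..t}"
    using assms
    by (intro fundamental_theorem_of_calculus)
       (auto intro: has_vector_derivative_within_subset[OF has_vector_derivative_y])
  then have "payoff (integral {0..t} strategy) = y t - y 0"
    using integral_linear[OF strategy_integrable[of t] lin] by (simp add: o_def integral_unique)
  then show ?thesis
    unfolding average_strategy_def using linear_cmul[OF bounded_linear.linear[OF lin]] by simp
qed

lemma average_payoff_spread_le:
  obtains C where "\<And>t. t > 0 \<Longrightarrow>
    spread (v1 U1 (average_strategy t)) + spread (v2 U2 (average_strategy t)) \<le> C / t"
proof -
  obtain B where B: "\<And>t. t \<ge> 0 \<Longrightarrow> spread (fst (y t)) \<le> B \<and> spread (snd (y t)) \<le> B"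
    using score_spread_bounded by blast
  have "spread (v1 U1 (average_strategy t)) + spread (v2 U2 (average_strategy t)) \<le> 4 * B / t"
    if "t > 0" for t
  proof -
    have "v1 U1 (average_strategy t) = (1 / t) *\<^sub>R (fst (y t) - fst (y 0))"
      "v2 U2 (average_strategy t) = (1 / t) *\<^sub>R (snd (y t) - snd (y 0))"
      using payoff_average_strategy[OF that] by (simp_all add: payoff_def prod_eq_iff)
    then have "spread (v1 U1 (average_strategy t)) + spread (v2 U2 (average_strategy t))
        \<le> (spread (fst (y t)) + spread (fst (y 0))) / t
          + (spread (snd (y t)) + spread (snd (y 0))) / t"
      using that by (simp add: spread_scaleR) (intro add_mono divide_right_mono spread_diff_le; simp)
    also have "\<dots> \<le> 2 * B / t + 2 * B / t"
      using B[of t] B[of 0] that by (intro add_mono divide_right_mono) auto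
    finally show ?thesis by simp
  qed
  then show ?thesis by (rule that)
qed

theorem average_strategy_tendsto_equilibria:
  "((\<lambda>t. infdist (average_strategy t) (nash_equilibria U1 U2)) \<longlongrightarrow> 0) at_top"
proof (rule infdist_tendsto_0_compact)
  let ?\<psi> = "\<lambda>z. spread (v1 U1 z) + spread (v2 U2 z)"
  show "compact (mixed \<times> mixed :: ((real^'a) \<times> (real^'b)) set)"
    by (intro compact_Times compact_mixed)
  show "continuous_on (mixed \<times> mixed) ?\<psi>"
    by (intro continuous_intros linear_continuous_on bounded_linear_v1 bounded_linear_v2)
  show "\<And>z. 0 \<le> ?\<psi> z"
    by (simp add: add_nonneg_nonneg spread_nonneg)
  show "{z \<in> mixed \<times> mixed. ?\<psi> z = 0} \<subseteq> nash_equilibria U1 U2"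
    by (auto intro!: nash_equilibriumI_indifferent simp: add_nonneg_eq_0_iff spread_nonneg)
  show "\<forall>\<^sub>F t in at_top. average_strategy t \<in> mixed \<times> mixed"
    using eventually_gt_at_top[of 0]
    by eventually_elim (simp add: mem_Times_iff average_strategy_in_mixed)
  obtain C where C: "\<And>t. t > 0 \<Longrightarrow> ?\<psi> (average_strategy t) \<le> C / t"
    using average_payoff_spread_le by blast
  have lim: "((\<lambda>t. C / t) \<longlongrightarrow> 0) at_top"
    by (intro tendsto_divide_0[OF tendsto_const] filterlim_at_top_imp_at_infinity filterlim_ident)
  have upper: "\<forall>\<^sub>F t in at_top. ?\<psi> (average_strategy t) \<le> C / t"
    by (rule eventually_mono[OF eventually_gt_at_top[of 0] C])
  have lower: "\<forall>\<^sub>F t in at_top. 0 \<le> ?\<psi> (average_strategy t)"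
    by (simp add: add_nonneg_nonneg spread_nonneg)
  show "((\<lambda>t. ?\<psi> (average_strategy t)) \<longlongrightarrow> 0) at_top"
    by (rule tendsto_sandwich[OF lower upper tendsto_const lim])
qed

end

theorem proposition6p2:
  fixes U1 :: "'a::finite \<Rightarrow> 'b::finite \<Rightarrow> real" and U2 :: "'a \<Rightarrow> 'b \<Rightarrow> real"
    and h1 :: "real^'a \<Rightarrow> real" and h2 :: "real^'b \<Rightarrow> real"
    and y :: "real \<Rightarrow> (real^'a) \<times> (real^'b)"
  assumes zero_sum: "\<And>a b. U2 a b = - U1 a b"
    and interior_NE: "\<exists>x\<in>nash_equilibria U1 U2. x \<in> rel_interior (mixed \<times> mixed)"
    and h1: "penalty h1" and h2: "penalty h2"
    and sol: "\<And>t. t \<ge> 0 \<Longrightarrow>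
       (y has_vector_derivative
          (let x = (choice h1 (fst (y t)), choice h2 (snd (y t))) in (v1 U1 x, v2 U2 x)))
         (at t within {0..})"
  shows "((\<lambda>t. infdist
              ((1 / t) *\<^sub>R integral {0..t} (\<lambda>s. (choice h1 (fst (y s)), choice h2 (snd (y s)))))
              (nash_equilibria U1 U2)) \<longlongrightarrow> 0) at_top"
proof -
  obtain a1 a2 where "(a1, a2) \<in> nash_equilibria U1 U2" "(a1, a2) \<in> rel_interior (mixed \<times> mixed)"
    using interior_NE by auto
  then interpret zero_sum_ftrl U1 U2 h1 h2 y a1 a2
    using zero_sum h1 h2 sol by unfold_locales
  show ?thesis
    using average_strategy_tendsto_equilibria
    unfolding average_strategy_def strategy_def[abs_def] .
qed

end
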